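(* For all integers $m\ge1$, $n,h,r\ge0$ and $0\le s\le n+h$, $$W_{m,r}(n+h,s)=\sum_{k=0}^n\sum_{j=0}^h\binom nk W_{m,r}(h,j)\,W_{m,r}(k,s-j)\,(jm)^{n-k},$$ with the conventions $0^0=1$ and $W_{m,r}(k,i)=0$ if $i<0$ or $i>k$.
   Context: For integers $m\ge1$, $n,k,r\ge0$, $W_{m,r}(n,k)$ denotes the $r$-Whitney number of the second kind, defined by $\sum_{n\ge k}W_{m,r}(n,k)\frac{z^n}{n!}=\frac{e^{rz}}{k!}\left(\frac{e^{mz}-1}{m}\right)^k$ (equivalently $(mx+r)^n=\sum_{k=0}^n m^kW_{m,r}(n,k)\,x(x-1)\cdots(x-k+1)$). *)

theory Defs
  imports "HOL-Computational_Algebra.Formal_Power_Series"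
begin

definition whitney2 :: "nat \<Rightarrow> nat \<Rightarrow> nat \<Rightarrow> nat \<Rightarrow> rat" where
  "whitney2 m r n k =
     fact n * fps_nth (fps_exp (of_nat r) * fps_const (1 / fact k)
        * ((fps_exp (of_nat m) - 1) / fps_const (of_nat m)) ^ k) n"

definition W :: "nat \<Rightarrow> nat \<Rightarrow> nat \<Rightarrow> int \<Rightarrow> rat" where
  "W m r n i = (if i < 0 \<or> i > int n then 0 else whitney2 m r n (nat i))"

end

theory Submission
  imports Defs
begin

text \<open>Differentiating the exponential generating function gives the triangular recurrence
W(n+1,i) = W(n,i-1) + (im+r) W(n,i). Replacing r by r + cm multiplies the generating function
by e^{cmz}, i.e. it is the binomial transform with weights (cm)^{n-k}. The identity therefore
says W_{m,r}(n+h,s) = \<Sum>_j W_{m,r}(h,j) W_{m,r+jm}(n,s-j), which holds by induction on n because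
the j-th summand obeys the recurrence with coefficient (s-j)m + (r+jm) = sm + r, independent of j.\<close>

definition whitney2_egf :: "nat \<Rightarrow> nat \<Rightarrow> nat \<Rightarrow> rat fps" where
  "whitney2_egf m r k = fps_exp (of_nat r) * fps_const (1 / fact k)
     * ((fps_exp (of_nat m) - 1) / fps_const (of_nat m)) ^ k"

lemma whitney2_eq_egf_nth: "whitney2 m r n k = fact n * fps_nth (whitney2_egf m r k) n"
  by (simp add: whitney2_def whitney2_egf_def)

lemma fps_deriv_power_div_fact_Suc:
  fixes E D :: "'a::field_char_0 fps"
  assumes dE: "fps_deriv E = fps_const a * E" and dD: "fps_deriv D = 1 + fps_const b * D"
  shows "fps_deriv (E * fps_const (1 / fact (Suc k)) * D ^ Suc k) =
    fps_const (of_nat (Suc k) * b + a) * (E * fps_const (1 / fact (Suc k)) * D ^ Suc k)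
    + E * fps_const (1 / fact k) * D ^ k"
proof -
  define A B C N where "A = fps_const a" and "B = fps_const b"
    and "C = fps_const (1 / fact (Suc k) :: 'a)" and "N = fps_const (of_nat (Suc k) :: 'a)"
  have NC: "N * C = fps_const (1 / fact k)"
    unfolding N_def C_def by (simp del: of_nat_Suc)
  have "fps_deriv (E * C * D ^ Suc k) = C * (A * E * D ^ Suc k + E * (N * (1 + B * D) * D ^ k))"
    unfolding A_def B_def C_def N_def by (simp add: fps_deriv_power dE dD algebra_simps del: of_nat_Suc power_Suc)
  also have "\<dots> = (N * B + A) * (E * C * D ^ Suc k) + E * (N * C) * D ^ k"
    by (simp add: algebra_simps)
  finally show ?thesis
    unfolding NC by (simp add: A_def B_def C_def N_def)
qed

lemma fps_deriv_whitney2_egf_0: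
  "fps_deriv (whitney2_egf m r 0) = fps_const (of_nat r) * whitney2_egf m r 0"
  by (simp add: whitney2_egf_def)

lemma fps_deriv_whitney2_egf_Suc:
  assumes "m > 0"
  shows "fps_deriv (whitney2_egf m r (Suc k)) =
    fps_const (of_nat (Suc k * m + r)) * whitney2_egf m r (Suc k) + whitney2_egf m r k"
proof -
  define D where "D = (fps_exp (of_nat m) - 1) / fps_const (of_nat m :: rat)"
  have "fps_deriv D = 1 + fps_const (of_nat m) * D"
    using assms by (simp add: D_def algebra_simps)
  then show ?thesis
    using fps_deriv_power_div_fact_Suc[of "fps_exp (of_nat r)" "of_nat r" D "of_nat m" k]
    by (simp add: whitney2_egf_def D_def algebra_simps del: divide_fps_const)
qed

lemma whitney2_Suc_eq_deriv:
  "whitney2 m r (Suc n) k = fact n * fps_nth (fps_deriv (whitney2_egf m r k)) n"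
  by (simp add: whitney2_eq_egf_nth algebra_simps)

lemma whitney2_Suc_0: "whitney2 m r (Suc n) 0 = of_nat r * whitney2 m r n 0"
  unfolding whitney2_Suc_eq_deriv fps_deriv_whitney2_egf_0 by (simp add: whitney2_eq_egf_nth)

lemma whitney2_Suc_Suc:
  assumes "m > 0"
  shows "whitney2 m r (Suc n) (Suc k) =
    whitney2 m r n k + of_nat (Suc k * m + r) * whitney2 m r n (Suc k)"
  unfolding whitney2_Suc_eq_deriv fps_deriv_whitney2_egf_Suc[OF assms]
  by (simp add: whitney2_eq_egf_nth algebra_simps)

lemma whitney2_0_left: "whitney2 m r 0 k = (if k = 0 then 1 else 0)"
  by (cases k) (simp_all add: whitney2_def)

lemma whitney2_eq_0:
  assumes "m > 0" and "n < k"
  shows "whitney2 m r n k = 0"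
  using assms(2)
proof (induction n arbitrary: k)
  case 0
  then show ?case by (simp add: whitney2_0_left)
next
  case (Suc n)
  then obtain l where "k = Suc l" and "n < l"
    by (cases k) auto
  with Suc.IH show ?case
    by (simp add: whitney2_Suc_Suc[OF assms(1)])
qed

lemma W_of_nat: "m > 0 \<Longrightarrow> W m r n (int k) = whitney2 m r n k"
  by (auto simp: W_def whitney2_eq_0)

lemma W_0_left: "W m r 0 i = (if i = 0 then 1 else 0)"
  by (auto simp: W_def whitney2_0_left)

lemma W_Suc:
  assumes "m > 0"
  shows "W m r (Suc n) i = W m r n (i - 1) + (of_int i * of_nat m + of_nat r) * W m r n i"
proof (cases "i \<le> 0")
  case True
  then show ?thesis
    using whitney2_Suc_0[of m r n] by (auto simp: W_def)
next
  case False
  define k where "k = nat (i - 1)"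
  have i: "i = int (Suc k)" and i1: "i - 1 = int k"
    using False by (simp_all add: k_def)
  show ?thesis
    unfolding i1 unfolding i W_of_nat[OF assms] whitney2_Suc_Suc[OF assms]
    by (simp add: algebra_simps)
qed

lemma sum_binomial_power_Suc:
  fixes x :: "'a::comm_semiring_1"
  shows "(\<Sum>k\<le>Suc n. of_nat (Suc n choose k) * x ^ (Suc n - k) * f k) =
    x * (\<Sum>k\<le>n. of_nat (n choose k) * x ^ (n - k) * f k)
    + (\<Sum>k\<le>n. of_nat (n choose k) * x ^ (n - k) * f (Suc k))"
proof -
  have "(\<Sum>k\<le>Suc n. of_nat (Suc n choose k) * x ^ (Suc n - k) * f k) =
      (\<Sum>k\<le>Suc n. of_nat (n choose k) * x ^ (Suc n - k) * f k)
      + (\<Sum>k\<le>n. of_nat (n choose k) * x ^ (n - k) * f (Suc k))"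
    unfolding sum.atMost_Suc_shift by (simp add: sum.distrib algebra_simps)
  also have "(\<Sum>k\<le>Suc n. of_nat (n choose k) * x ^ (Suc n - k) * f k) =
      x * (\<Sum>k\<le>n. of_nat (n choose k) * x ^ (n - k) * f k)"
    by (simp add: sum_distrib_left Suc_diff_le mult_ac binomial_eq_0)
  finally show ?thesis .
qed

lemma W_shift_r_binomial:
  assumes "m > 0"
  shows "W m (r + c * m) n i = (\<Sum>k\<le>n. of_nat (n choose k) * of_nat (c * m) ^ (n - k) * W m r k i)"
proof (induction n arbitrary: i)
  case 0
  then show ?case by (simp add: W_0_left)
next
  case (Suc n)
  have "(\<Sum>k\<le>Suc n. of_nat (Suc n choose k) * of_nat (c * m) ^ (Suc n - k) * W m r k i) =
      of_nat (c * m) * W m (r + c * m) n i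
      + (\<Sum>k\<le>n. of_nat (n choose k) * of_nat (c * m) ^ (n - k)
          * (W m r k (i - 1) + (of_int i * of_nat m + of_nat r) * W m r k i))"
    unfolding sum_binomial_power_Suc W_Suc[OF assms] Suc.IH ..
  also have "\<dots> = W m (r + c * m) n (i - 1) + (of_int i * of_nat m + of_nat (r + c * m)) * W m (r + c * m) n i"
    by (simp add: Suc.IH sum.distrib sum_distrib_left algebra_simps)
  finally show ?case
    by (simp add: W_Suc[OF assms])
qed

lemma W_eq_sum_delta:
  "W m r h s = (\<Sum>j\<le>h. W m r h (int j) * (if s = int j then 1 else 0))"
proof (cases "0 \<le> s \<and> s \<le> int h")
  case True
  then obtain t where s: "s = int t" and "t \<le> h"
    by (metis nonneg_int_cases of_nat_le_iff)
  then show ?thesis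
    by (simp add: if_distrib cong: if_cong)
next
  case False
  then show ?thesis
    by (auto simp: W_def intro!: sum.neutral)
qed

lemma W_add_convolution:
  assumes "m > 0"
  shows "W m r (n + h) s = (\<Sum>j\<le>h. W m r h (int j) * W m (r + j * m) n (s - int j))"
proof (induction n arbitrary: s)
  case 0
  show ?case
    using W_eq_sum_delta[of m r h s] by (simp add: W_0_left)
next
  case (Suc n)
  have "W m r (Suc n + h) s = W m r (n + h) (s - 1) + (of_int s * of_nat m + of_nat r) * W m r (n + h) s"
    by (simp add: W_Suc[OF assms])
  also have "\<dots> = (\<Sum>j\<le>h. W m r h (int j) * W m (r + j * m) (Suc n) (s - int j))"
    unfolding Suc.IH by (simp add: W_Suc[OF assms] sum.distrib sum_distrib_left algebra_simps)
  finally show ?case .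
qed

theorem mainTheorem6:
  fixes m n h r s :: nat
  assumes "m \<ge> 1" and "s \<le> n + h"
  shows "W m r (n + h) (int s) =
    (\<Sum>k=0..n. \<Sum>j=0..h. of_nat (n choose k) * W m r h (int j) * W m r k (int s - int j)
        * (of_nat (j * m)) ^ (n - k))"
proof -
  have m: "m > 0"
    using assms(1) by simp
  have "W m r (n + h) (int s) = (\<Sum>j\<le>h. W m r h (int j) * W m (r + j * m) n (int s - int j))"
    by (rule W_add_convolution[OF m])
  also have "\<dots> = (\<Sum>j\<le>h. \<Sum>k\<le>n. of_nat (n choose k) * W m r h (int j) * W m r k (int s - int j)
        * (of_nat (j * m)) ^ (n - k))"
    by (simp add: W_shift_r_binomial[OF m] sum_distrib_left mult_ac)
  also have "\<dots> = (\<Sum>k=0..n. \<Sum>j=0..h. of_nat (n choose k) * W m r h (int j) * W m r k (int s - int j)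
        * (of_nat (j * m)) ^ (n - k))"
    by (simp add: atLeast0AtMost sum.swap[of _ "{..h}"])
  finally show ?thesis .
qed

end
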